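(* Consider the generalized urn model described in the context and assume condition (A'1). Then almost surely, for every $n\ge 0$, $w(Y_n)>0$, and the sequence $(w(Y_n))_{n\ge 0}$ is non-decreasing.
   Context: Let $d\ge 1$, let $(\Omega,\mathcal A,\mathbb P)$ be a probability space, let $e^1,\dots,e^d$ be the canonical basis of $\mathbb R^d$, and for $u=(u^i)\in\mathbb R^d$ let $w(u)=\sum_{k=1}^d u^k$. Let $Y_0$ be a random vector in $\mathbb R_+^d\setminus\{0\}$, let $(U_n)_{n\ge1}$ be i.i.d. uniform on $[0,1]$, and let $(D_n)_{n\ge1}$ be random $d\times d$ real matrices (the addition rule matrices). Define recursively, for $n\ge1$, $X_n=\sum_{j=1}^d \mathbf 1_{\left\{\frac{\sum_{\ell=1}^{j-1}Y_{n-1}^\ell}{\sum_{\ell=1}^d Y_{n-1}^\ell}<U_n\le \frac{\sum_{\ell=1}^{j}Y_{n-1}^\ell}{\sum_{\ell=1}^d Y_{n-1}^\ell}\right\}}e^j$ and $Y_n=Y_{n-1}+D_nX_n$. Let $\mathcal F_n=\sigma(Y_0,U_k,D_k,1\le k\le n)$ and $H_n=\mathbb E[D_n\mid\mathcal F_{n-1}]$ (entrywise), $n\ge1$. Condition (A'1): (i) there exist $c_1,\dots,c_d\in(0,\infty)$ such that for every $n\ge1$ and all $i,j\in\{1,\dots,d\}$, $\frac{\delta_{ij}}{c_i}+D_n^{ij}\in\frac{\mathbb N}{c_i}$ a.s. ($\delta_{ij}$ the Kronecker symbol), and for every $j$, $\sum_{i=1}^d D_n^{ij}\ge 0$ a.s.;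 (ii) for every $n\ge1$ and every $j$, $\sum_{i=1}^d H_n^{ij}=1$ a.s.; (iii) $Y_0\in\left(\prod_{i=1}^d\frac{\mathbb N}{c_i}\right)\setminus\{0\}$. *)

theory Defs
  imports "HOL-Probability.Probability"
begin

text \<open>Vectors of R^d are functions nat => real with meaningful indices 1..d;
  d x d matrices are functions nat => nat => real (row, column), indices 1..d.\<close>

definition urn_w :: "nat \<Rightarrow> (nat \<Rightarrow> real) \<Rightarrow> real" where
  "urn_w d u = (\<Sum>k=1..d. u k)"

text \<open>The drawn colour vector: component j of X_n, given Y_{n-1} = y and U_n = u.\<close>
definition urn_draw :: "nat \<Rightarrow> (nat \<Rightarrow> real) \<Rightarrow> real \<Rightarrow> nat \<Rightarrow> real" where
  "urn_draw d y u j =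
     (if j \<in> {1..d} \<and>
         (\<Sum>l=1..j-1. y l) / (\<Sum>l=1..d. y l) < u \<and>
         u \<le> (\<Sum>l=1..j. y l) / (\<Sum>l=1..d. y l)
      then 1 else 0)"

fun urn_Y :: "nat \<Rightarrow> ('a \<Rightarrow> nat \<Rightarrow> real) \<Rightarrow> (nat \<Rightarrow> 'a \<Rightarrow> real)
              \<Rightarrow> (nat \<Rightarrow> 'a \<Rightarrow> nat \<Rightarrow> nat \<Rightarrow> real) \<Rightarrow> nat \<Rightarrow> 'a \<Rightarrow> nat \<Rightarrow> real" where
  "urn_Y d Y0 U D 0 x = Y0 x"
| "urn_Y d Y0 U D (Suc n) x =
     (\<lambda>i. urn_Y d Y0 U D n x i
          + (\<Sum>j=1..d. D (Suc n) x i j * urn_draw d (urn_Y d Y0 U D n x) (U (Suc n) x) j))"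

definition urn_X :: "nat \<Rightarrow> ('a \<Rightarrow> nat \<Rightarrow> real) \<Rightarrow> (nat \<Rightarrow> 'a \<Rightarrow> real)
              \<Rightarrow> (nat \<Rightarrow> 'a \<Rightarrow> nat \<Rightarrow> nat \<Rightarrow> real) \<Rightarrow> nat \<Rightarrow> 'a \<Rightarrow> nat \<Rightarrow> real" where
  "urn_X d Y0 U D n x = urn_draw d (urn_Y d Y0 U D (n - 1) x) (U n x)"

definition urn_filtration :: "'a measure \<Rightarrow> nat \<Rightarrow> ('a \<Rightarrow> nat \<Rightarrow> real) \<Rightarrow> (nat \<Rightarrow> 'a \<Rightarrow> real)
              \<Rightarrow> (nat \<Rightarrow> 'a \<Rightarrow> nat \<Rightarrow> nat \<Rightarrow> real) \<Rightarrow> nat \<Rightarrow> 'a measure" where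
  "urn_filtration M d Y0 U D n = sigma (space M)
     ({(\<lambda>x. Y0 x i) -` B \<inter> space M | i B. i \<in> {1..d} \<and> B \<in> sets borel}
      \<union> {U k -` B \<inter> space M | k B. k \<in> {1..n} \<and> B \<in> sets borel}
      \<union> {(\<lambda>x. D k x i j) -` B \<inter> space M | k i j B.
            k \<in> {1..n} \<and> i \<in> {1..d} \<and> j \<in> {1..d} \<and> B \<in> sets borel})"

definition urn_H :: "'a measure \<Rightarrow> nat \<Rightarrow> ('a \<Rightarrow> nat \<Rightarrow> real) \<Rightarrow> (nat \<Rightarrow> 'a \<Rightarrow> real)
              \<Rightarrow> (nat \<Rightarrow> 'a \<Rightarrow> nat \<Rightarrow> nat \<Rightarrow> real) \<Rightarrow> nat \<Rightarrow> nat \<Rightarrow> nat \<Rightarrow> 'a \<Rightarrow> real" where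
  "urn_H M d Y0 U D n i j =
     real_cond_exp M (urn_filtration M d Y0 U D (n - 1)) (\<lambda>x. D n x i j)"

end

theory Submission
  imports Defs
begin

text \<open>Since X_n is a 0/1 vector, w(Y_n) - w(Y_{n-1}) is a combination with nonnegative weights
  of the column sums of D_n, which are a.s. nonnegative; so w(Y_n) is a.s. non-decreasing and
  stays at least w(Y_0) > 0.\<close>

lemma urn_draw_nonneg: "0 \<le> urn_draw d y u j"
  by (simp add: urn_draw_def)

lemma urn_w_urn_Y_Suc:
  "urn_w d (urn_Y d Y0 U D (Suc n) x) =
     urn_w d (urn_Y d Y0 U D n x)
     + (\<Sum>j=1..d. urn_draw d (urn_Y d Y0 U D n x) (U (Suc n) x) j * (\<Sum>i=1..d. D (Suc n) x i j))"
proof -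
  let ?X = "urn_draw d (urn_Y d Y0 U D n x) (U (Suc n) x)"
  have "urn_w d (urn_Y d Y0 U D (Suc n) x) =
          urn_w d (urn_Y d Y0 U D n x) + (\<Sum>i=1..d. \<Sum>j=1..d. D (Suc n) x i j * ?X j)"
    by (simp add: urn_w_def sum.distrib)
  also have "(\<Sum>i=1..d. \<Sum>j=1..d. D (Suc n) x i j * ?X j) = (\<Sum>j=1..d. ?X j * (\<Sum>i=1..d. D (Suc n) x i j))"
    by (subst sum.swap) (simp add: sum_distrib_right mult.commute)
  finally show ?thesis .
qed

lemma mono_urn_w_urn_Y:
  assumes "\<And>n j. j \<in> {1..d} \<Longrightarrow> (\<Sum>i=1..d. D (Suc n) x i j) \<ge> 0"
  shows "mono (\<lambda>n. urn_w d (urn_Y d Y0 U D n x))"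
  unfolding mono_iff_le_Suc urn_w_urn_Y_Suc
  by (intro allI add_increasing2[OF _ order_refl] sum_nonneg mult_nonneg_nonneg urn_draw_nonneg assms)
    simp

lemma urn_w_pos:
  assumes "\<forall>i\<in>{1..d}. y i \<ge> 0" and "\<exists>i\<in>{1..d}. y i \<noteq> 0"
  shows "urn_w d y > 0"
proof -
  from assms obtain i where i: "i \<in> {1..d}" "y i > 0"
    by (metis order.not_eq_order_implies_strict)
  have "y i \<le> (\<Sum>k=1..d. y k)"
    using assms(1) i(1) by (intro member_le_sum) auto
  with i(2) show ?thesis
    by (simp add: urn_w_def)
qed

theorem lemma1:
  fixes M :: "'a measure" and d :: nat
    and Y0 :: "'a \<Rightarrow> nat \<Rightarrow> real"
    and U :: "nat \<Rightarrow> 'a \<Rightarrow> real"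
    and D :: "nat \<Rightarrow> 'a \<Rightarrow> nat \<Rightarrow> nat \<Rightarrow> real"
    and c :: "nat \<Rightarrow> real"
  assumes "prob_space M"
    and "d \<ge> 1"
    and Y0_meas: "\<And>i. i \<in> {1..d} \<Longrightarrow> (\<lambda>x. Y0 x i) \<in> borel_measurable M"
    and Y0_pos: "\<And>x. x \<in> space M \<Longrightarrow> (\<forall>i\<in>{1..d}. Y0 x i \<ge> 0) \<and> (\<exists>i\<in>{1..d}. Y0 x i \<noteq> 0)"
    and U_meas: "\<And>n. n \<ge> 1 \<Longrightarrow> U n \<in> borel_measurable M"
    and U_indep: "prob_space.indep_vars M (\<lambda>_. borel) U {1..}"
    and U_unif: "\<And>n. n \<ge> 1 \<Longrightarrow> distr M borel (U n) = uniform_measure lborel {0..1::real}"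
    and D_meas: "\<And>n i j. n \<ge> 1 \<Longrightarrow> i \<in> {1..d} \<Longrightarrow> j \<in> {1..d} \<Longrightarrow>
                   (\<lambda>x. D n x i j) \<in> borel_measurable M"
    \<comment> \<open>(A'1)(i)\<close>
    and c_pos: "\<And>i. i \<in> {1..d} \<Longrightarrow> c i > 0"
    and A1_int: "\<And>n i j. n \<ge> 1 \<Longrightarrow> i \<in> {1..d} \<Longrightarrow> j \<in> {1..d} \<Longrightarrow>
          AE x in M. (if i = j then 1 else 0) / c i + D n x i j \<in> (\<lambda>k::nat. real k / c i) ` UNIV"
    and A1_col: "\<And>n j. n \<ge> 1 \<Longrightarrow> j \<in> {1..d} \<Longrightarrow> AE x in M. (\<Sum>i=1..d. D n x i j) \<ge> 0"
    \<comment> \<open>(A'1)(ii)\<close>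
    and A2: "\<And>n j. n \<ge> 1 \<Longrightarrow> j \<in> {1..d} \<Longrightarrow>
          AE x in M. (\<Sum>i=1..d. urn_H M d Y0 U D n i j x) = 1"
    \<comment> \<open>(A'1)(iii)\<close>
    and A3: "\<And>x i. x \<in> space M \<Longrightarrow> i \<in> {1..d} \<Longrightarrow> Y0 x i \<in> (\<lambda>k::nat. real k / c i) ` UNIV"
  shows "AE x in M. (\<forall>n. urn_w d (urn_Y d Y0 U D n x) > 0)
                    \<and> mono (\<lambda>n. urn_w d (urn_Y d Y0 U D n x))"
proof -
  have "AE x in M. \<forall>n. \<forall>j\<in>{1..d}. (\<Sum>i=1..d. D (Suc n) x i j) \<ge> 0"
    unfolding AE_all_countable
    by (intro allI AE_ball_countable') (use A1_col in auto)
  then show ?thesis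
  proof (rule AE_mp, intro AE_I2 impI)
    fix x assume x: "x \<in> space M"
      and col: "\<forall>n. \<forall>j\<in>{1..d}. (\<Sum>i=1..d. D (Suc n) x i j) \<ge> 0"
    let ?W = "\<lambda>n. urn_w d (urn_Y d Y0 U D n x)"
    have mono: "mono ?W"
      using col by (intro mono_urn_w_urn_Y) blast
    have "?W 0 > 0"
      using Y0_pos[OF x] by (simp add: urn_w_pos)
    with mono have "?W n > 0" for n
      by (meson le0 less_le_trans monoD)
    with mono show "(\<forall>n. ?W n > 0) \<and> mono ?W"
      by blast
  qed
qed

end
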